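(* Let $N\ge 2$ be an integer and for $n\ge 0$ let $$r_{N-1,N}(n)=\operatorname{CT}_{X_1,\ldots,X_N}\big(\sigma_{N-1}(X_1+X_1^{-1},\ldots,X_N+X_N^{-1})\big)^n .$$ Then for all $n\ge 0$, $$r_{N-1,N}(2n)=\sum_{\substack{k_1,\ldots,k_N\ge 0\\ k_1+\cdots+k_N=n}}\binom{2n}{2k_1,\ldots,2k_N}\binom{2(n-k_1)}{n-k_1}\cdots\binom{2(n-k_N)}{n-k_N}.$$ Moreover, if $N$ is even then $r_{N-1,N}(2n+1)=0$ for all $n\ge0$, and if $N$ is odd then for all $n\ge 0$, $$r_{N-1,N}(2n+1)=\sum_{\substack{k_1,\ldots,k_N\ge 0\\ k_1+\cdots+k_N=n+\frac{1-N}{2}}}\binom{2n+1}{2k_1+1,\ldots,2k_N+1}\binom{2(n-k_1)}{n-k_1}\cdots\binom{2(n-k_N)}{n-k_N}.$$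
   Context: $\sigma_{M}(y_1,\ldots,y_N)=\sum_{1\le j_1<\cdots<j_M\le N} y_{j_1}\cdots y_{j_M}$ is the $M$-th elementary symmetric polynomial. $\operatorname{CT}_{X_1,\ldots,X_N} f$ denotes the constant term (coefficient of $X_1^0\cdots X_N^0$) of a Laurent polynomial $f$. $\binom{m}{a_1,\ldots,a_N}=\frac{m!}{a_1!\cdots a_N!}$ denotes the multinomial coefficient (with $a_1+\cdots+a_N=m$); an empty sum is $0$. *)

theory Defs
  imports Main "HOL-Library.Poly_Mapping"
begin

text \<open>Laurent polynomials with integer coefficients in variables X_0, X_1, ...:
  finitely supported maps from integer exponent vectors (finitely supported
  nat => int) to int coefficients.\<close>
type_synonym laurent = "(nat \<Rightarrow>\<^sub>0 int) \<Rightarrow>\<^sub>0 int"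

definition LX :: "nat \<Rightarrow> laurent" where
  "LX i = Poly_Mapping.single (Poly_Mapping.single i 1) 1"

definition LXinv :: "nat \<Rightarrow> laurent" where
  "LXinv i = Poly_Mapping.single (Poly_Mapping.single i (-1)) 1"

definition CT :: "laurent \<Rightarrow> int" where
  "CT f = Poly_Mapping.lookup f 0"

definition esym :: "nat \<Rightarrow> nat \<Rightarrow> (nat \<Rightarrow> 'a::comm_ring_1) \<Rightarrow> 'a" where
  "esym M N y = (\<Sum>S\<in>{S. S \<subseteq> {..<N} \<and> card S = M}. \<Prod>j\<in>S. y j)"

definition r :: "nat \<Rightarrow> nat \<Rightarrow> nat \<Rightarrow> int" where
  "r M N n = CT ((esym M N (\<lambda>i. LX i + LXinv i)) ^ n)"

definition multinomial :: "nat \<Rightarrow> nat \<Rightarrow> (nat \<Rightarrow> nat) \<Rightarrow> nat" where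
  "multinomial m N a = fact m div (\<Prod>i<N. fact (a i))"

definition comps :: "nat \<Rightarrow> nat \<Rightarrow> (nat \<Rightarrow> nat) set" where
  "comps N s = {k. (\<forall>i\<ge>N. k i = 0) \<and> (\<Sum>i<N. k i) = s}"

end

theory Submission
  imports Defs "HOL-Library.FuncSet"
begin

(* Since sigma_{N-1}(y) = sum_j prod_{i ~= j} y_i, the multinomial theorem gives
   sigma_{N-1}(y)^n = sum_m binom(n; m) prod_i y_i^(n - m_i) over compositions m of n.
   For y_i = X_i + 1/X_i the variables separate, and the constant term of (X + 1/X)^e is
   binom(e, e/2) for even e and 0 for odd e. So only compositions with m_i = n (mod 2) for
   all i contribute; writing n = 2q + p and m_i = 2k_i + p gives 2(k_1 + ... + k_N) + pN = n,
   which has no solution when n is odd and N even, and otherwise turns the sum into the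
   stated one, with n - m_i = 2(q - k_i). *)

lemma comps_le: "m \<in> comps N s \<Longrightarrow> i < N \<Longrightarrow> m i \<le> s"
  unfolding comps_def using member_le_sum[of i "{..<N}" m] by auto

lemma finite_comps: "finite (comps N s)"
proof -
  have "comps N s \<subseteq> {f. \<forall>x. (x \<in> {..<N} \<longrightarrow> f x \<in> {..s}) \<and> (x \<notin> {..<N} \<longrightarrow> f x = 0)}"
    using comps_le by (auto simp: comps_def)
  then show ?thesis
    by (rule finite_subset) (rule finite_set_of_finite_funs, auto)
qed

lemma prod_fact_dvd_fact_sum:
  fixes N :: nat
  shows "(\<Prod>i<N. fact (a i) :: nat) dvd fact (\<Sum>i<N. a i)"
proof (induction N)
  case (Suc N)
  have "(\<Prod>i<Suc N. fact (a i) :: nat) = (\<Prod>i<N. fact (a i)) * fact (a N)" by simp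
  also have "\<dots> dvd fact (\<Sum>i<N. a i) * fact (a N)" using Suc by (simp add: mult_dvd_mono)
  also have "\<dots> dvd fact ((\<Sum>i<N. a i) + a N)" by (rule fact_fact_dvd_fact)
  finally show ?case by simp
qed simp

lemma multinomial_cong: "(\<And>i. i < N \<Longrightarrow> a i = b i) \<Longrightarrow> multinomial m N a = multinomial m N b"
  unfolding multinomial_def by (metis lessThan_iff prod.cong)

lemma multinomial_Suc_fun_upd:
  assumes "(\<Sum>i<N. m i) = k" "k \<le> n"
  shows "multinomial n (Suc N) (m(N := n - k)) = (n choose k) * multinomial k N m"
proof -
  define P where "P = (\<Prod>i<N. fact (m i) :: nat)"
  obtain Q where Q: "fact k = P * Q"
    using prod_fact_dvd_fact_sum[where N = N and a = m] assms unfolding P_def by (auto elim: dvdE)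
  have "P > 0" unfolding P_def by (simp add: prod_pos)
  moreover have "(\<Prod>i<Suc N. fact ((m(N := n - k)) i) :: nat) = P * fact (n - k)"
    unfolding P_def by (simp add: lessThan_Suc)
  moreover have "fact n = (n choose k) * (P * Q) * fact (n - k)"
    using binomial_fact_lemma[OF assms(2)] Q by (simp add: algebra_simps)
  ultimately show ?thesis
    unfolding multinomial_def P_def[symmetric] Q by (simp add: algebra_simps)
qed

theorem multinomial_theorem:
  fixes t :: "nat \<Rightarrow> 'a::comm_semiring_1"
  shows "(\<Sum>j<N. t j) ^ n = (\<Sum>m\<in>comps N n. of_nat (multinomial n N m) * (\<Prod>j<N. t j ^ m j))"
proof (induction N arbitrary: n)
  case 0
  have "comps 0 n = (if n = 0 then {\<lambda>_. 0} else {})" by (auto simp: comps_def)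
  then show ?case by (simp add: multinomial_def power_0_left)
next
  case (Suc N)
  let ?term = "\<lambda>k m. of_nat (n choose k) * of_nat (multinomial k N m) * (\<Prod>j<N. t j ^ m j) * t N ^ (n - k)"
  have "(\<Sum>j<Suc N. t j) ^ n = (\<Sum>k\<le>n. of_nat (n choose k) * (\<Sum>j<N. t j) ^ k * t N ^ (n - k))"
    by (simp add: binomial_ring)
  also have "\<dots> = (\<Sum>k\<le>n. \<Sum>m\<in>comps N k. ?term k m)"
    by (simp add: Suc sum_distrib_left sum_distrib_right mult.assoc)
  also have "\<dots> = (\<Sum>(k, m)\<in>Sigma {..n} (comps N). ?term k m)"
    by (rule sum.Sigma) (auto simp: finite_comps)
  also have "\<dots> = (\<Sum>m\<in>comps (Suc N) n. of_nat (multinomial n (Suc N) m) * (\<Prod>j<Suc N. t j ^ m j))"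
  proof (rule sum.reindex_bij_witness[where i = "\<lambda>m. (n - m N, m(N := 0))" and j = "\<lambda>(k, m). m(N := n - k)"])
    fix km assume "km \<in> Sigma {..n} (comps N)"
    then obtain k m where km: "km = (k, m)" "k \<le> n" "\<forall>i\<ge>N. m i = 0" and ms: "(\<Sum>i<N. m i) = k"
      by (auto simp: comps_def)
    have "(\<Prod>j<N. t j ^ (m(N := n - k)) j) = (\<Prod>j<N. t j ^ m j)" by (rule prod.cong) auto
    then show "of_nat (multinomial n (Suc N) (case km of (k, m) \<Rightarrow> m(N := n - k))) *
          (\<Prod>j<Suc N. t j ^ (case km of (k, m) \<Rightarrow> m(N := n - k)) j) = (case km of (k, m) \<Rightarrow> ?term k m)"
      using km multinomial_Suc_fun_upd[OF ms km(2)] by (simp add: mult_ac)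
    show "(case km of (k, m) \<Rightarrow> m(N := n - k)) \<in> comps (Suc N) n"
      using km ms by (auto simp: comps_def)
    show "(n - (case km of (k, m) \<Rightarrow> m(N := n - k)) N, (case km of (k, m) \<Rightarrow> m(N := n - k))(N := 0)) = km"
      using km by (auto simp: fun_eq_iff)
  next
    fix m assume "m \<in> comps (Suc N) n"
    then have m0: "\<forall>i\<ge>Suc N. m i = 0" and ms: "(\<Sum>i<N. m i) + m N = n" by (auto simp: comps_def)
    have "(\<Sum>i<N. (m(N := 0)) i) = (\<Sum>i<N. m i)" by (rule sum.cong) auto
    then show "(n - m N, m(N := 0)) \<in> Sigma {..n} (comps N)"
      using m0 ms by (auto simp: comps_def)
    show "(case (n - m N, m(N := 0)) of (k, m) \<Rightarrow> m(N := n - k)) = m"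
      using ms by (auto simp: fun_eq_iff)
  qed
  finally show ?case .
qed

lemma prod_single:
  "(\<Prod>i\<in>A. Poly_Mapping.single (v i) (c i)) =
     Poly_Mapping.single (\<Sum>i\<in>A. v i) (\<Prod>i\<in>A. c i :: 'b::comm_semiring_1)"
  for v :: "_ \<Rightarrow> 'a::comm_monoid_add"
  by (induction A rule: infinite_finite_induct) (simp_all add: mult_single)

lemma power_single_single:
  "Poly_Mapping.single (Poly_Mapping.single i a) (1::int) ^ k =
     Poly_Mapping.single (Poly_Mapping.single i (int k * a)) 1"
  by (induction k) (simp_all add: mult_single single_add[symmetric] algebra_simps)

lemma sum_single_eq_0_iff:
  fixes N :: nat and x :: "nat \<Rightarrow> 'a::comm_monoid_add"
  shows "(\<Sum>i<N. Poly_Mapping.single i (x i)) = 0 \<longleftrightarrow> (\<forall>i<N. x i = 0)"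
proof -
  have "Poly_Mapping.lookup (\<Sum>i<N. Poly_Mapping.single i (x i)) j = (if j < N then x j else 0)" for j
    by (simp add: lookup_sum lookup_single when_def)
  then show ?thesis
    by (auto simp: poly_mapping_eq_iff fun_eq_iff)
qed

lemma CT_single: "CT (Poly_Mapping.single v c) = (if v = 0 then c else 0)"
  by (simp add: CT_def lookup_single when_def)

lemma CT_sum: "CT (\<Sum>x\<in>A. f x) = (\<Sum>x\<in>A. CT (f x))"
  by (simp add: CT_def lookup_sum)

lemma CT_of_nat_mult: "CT (of_nat c * f) = int c * CT f"
  by (induction c) (simp_all add: CT_def lookup_add distrib_right)

lemma LX_plus_LXinv_power:
  "(LX i + LXinv i) ^ e =
     (\<Sum>a\<le>e. Poly_Mapping.single (Poly_Mapping.single i (2 * int a - int e)) (int (e choose a)))"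
proof -
  have "of_nat (e choose a) * LX i ^ a * LXinv i ^ (e - a) =
      Poly_Mapping.single (Poly_Mapping.single i (2 * int a - int e)) (int (e choose a))" if "a \<le> e" for a
  proof -
    have "of_nat (e choose a) * LX i ^ a * LXinv i ^ (e - a) =
        Poly_Mapping.single 0 (int (e choose a)) * Poly_Mapping.single (Poly_Mapping.single i (int a)) 1
          * Poly_Mapping.single (Poly_Mapping.single i (- int (e - a))) 1"
      by (simp add: LX_def LXinv_def power_single_single)
    also have "\<dots> = Poly_Mapping.single (Poly_Mapping.single i (int a + - int (e - a))) (int (e choose a))"
      by (simp only: mult_single add_0_left mult_1_right single_add)
    finally show ?thesis
      using that by (simp add: of_nat_diff)
  qed
  then show ?thesis
    by (simp add: binomial_ring)
qed

lemma CT_prod_univariate: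
  assumes "\<And>i. finite (A i)"
  shows "CT (\<Prod>i<N. \<Sum>a\<in>A i. Poly_Mapping.single (Poly_Mapping.single i (d i a)) (c i a)) =
           (\<Prod>i<N. \<Sum>a\<in>A i. if d i a = 0 then c i a else 0)"
proof -
  have if_all: "(if \<forall>i<N. P i then \<Prod>i<N. f i else 0) = (\<Prod>i<N. if P i then f i else 0)"
    for P :: "nat \<Rightarrow> bool" and f :: "nat \<Rightarrow> int"
    by (auto intro: prod_zero)
  have "(\<Prod>i<N. \<Sum>a\<in>A i. Poly_Mapping.single (Poly_Mapping.single i (d i a)) (c i a)) =
      (\<Sum>g\<in>PiE {..<N} A. Poly_Mapping.single (\<Sum>i<N. Poly_Mapping.single i (d i (g i))) (\<Prod>i<N. c i (g i)))"
    by (simp add: prod_sum_PiE assms prod_single)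
  then have "CT (\<Prod>i<N. \<Sum>a\<in>A i. Poly_Mapping.single (Poly_Mapping.single i (d i a)) (c i a)) =
      (\<Sum>g\<in>PiE {..<N} A. \<Prod>i<N. if d i (g i) = 0 then c i (g i) else 0)"
    by (simp add: CT_sum CT_single sum_single_eq_0_iff if_all)
  also have "\<dots> = (\<Prod>i<N. \<Sum>a\<in>A i. if d i a = 0 then c i a else 0)"
    by (simp add: prod_sum_PiE assms)
  finally show ?thesis .
qed

definition central_term :: "nat \<Rightarrow> nat" where
  "central_term e = (if even e then e choose (e div 2) else 0)"

lemma sum_binomial_balanced:
  "(\<Sum>a\<le>e. if 2 * a = e then e choose a else 0) = central_term e"
  by (auto simp: central_term_def)

lemma CT_prod_power:
  "CT (\<Prod>i<N. (LX i + LXinv i) ^ e i) = int (\<Prod>i<N. central_term (e i))"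
proof -
  have "(\<Sum>a\<le>e i. if 2 * int a - int (e i) = 0 then int (e i choose a) else 0) = int (central_term (e i))"
    for i
    by (auto simp: sum_binomial_balanced[symmetric] of_nat_sum if_distrib intro!: sum.cong)
  then show ?thesis
    by (simp add: LX_plus_LXinv_power CT_prod_univariate)
qed

lemma esym_pred:
  fixes y :: "nat \<Rightarrow> 'a::comm_ring_1"
  assumes "N \<ge> 1"
  shows "esym (N - 1) N y = (\<Sum>j<N. \<Prod>i\<in>{..<N} - {j}. y i)"
proof -
  have "{S. S \<subseteq> {..<N} \<and> card S = N - 1} = (\<lambda>j. {..<N} - {j}) ` {..<N}"
  proof (intro equalityI subsetI)
    fix S assume S: "S \<in> {S. S \<subseteq> {..<N} \<and> card S = N - 1}"
    then have "finite S"
      using finite_subset by blast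
    with S assms have "card ({..<N} - S) = 1"
      by (simp add: card_Diff_subset)
    then obtain j where j: "{..<N} - S = {j}" by (auto simp: card_Suc_eq)
    then have "S = {..<N} - {j}" using S by auto
    with j show "S \<in> (\<lambda>j. {..<N} - {j}) ` {..<N}" by blast
  qed auto
  moreover have "inj_on (\<lambda>j. {..<N} - {j}) {..<N}"
    by (auto simp: inj_on_def)
  ultimately show ?thesis
    unfolding esym_def by (simp add: sum.reindex)
qed

lemma prod_power_prod_remove:
  fixes y :: "nat \<Rightarrow> 'a::comm_semiring_1"
  assumes "(\<Sum>j<N. m j) = n"
  shows "(\<Prod>j<N. (\<Prod>i\<in>{..<N} - {j}. y i) ^ m j) = (\<Prod>i<N. y i ^ (n - m i))"
proof -
  have "(\<Prod>j<N. (\<Prod>i\<in>{..<N} - {j}. y i) ^ m j) = (\<Prod>j<N. \<Prod>i<N. y i ^ (if i = j then 0 else m j))"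
  proof (rule prod.cong)
    fix j assume "j \<in> {..<N}"
    have "(\<Prod>i<N. y i ^ (if i = j then 0 else m j)) = (\<Prod>i\<in>{..<N} - {j}. y i ^ m j)"
      by (rule prod.mono_neutral_cong_right) auto
    then show "(\<Prod>i\<in>{..<N} - {j}. y i) ^ m j = (\<Prod>i<N. y i ^ (if i = j then 0 else m j))"
      by (simp add: prod_power_distrib)
  qed simp
  also have "\<dots> = (\<Prod>i<N. \<Prod>j<N. y i ^ (if i = j then 0 else m j))"
    by (rule prod.swap)
  also have "\<dots> = (\<Prod>i<N. y i ^ (n - m i))"
  proof (rule prod.cong)
    fix i assume i: "i \<in> {..<N}"
    have "(\<Sum>j<N. if i = j then 0 else m j) = (\<Sum>j\<in>{..<N} - {i}. m j)"
      by (rule sum.mono_neutral_cong_right) auto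
    also have "\<dots> = n - m i"
      using i assms by (simp add: sum_diff1_nat)
    finally show "(\<Prod>j<N. y i ^ (if i = j then 0 else m j)) = y i ^ (n - m i)"
      by (simp only: power_sum[symmetric])
  qed simp
  finally show ?thesis .
qed

lemma r_pred_eq_sum_comps:
  assumes "N \<ge> 1"
  shows "r (N - 1) N n = int (\<Sum>m\<in>comps N n. multinomial n N m * (\<Prod>i<N. central_term (n - m i)))"
proof -
  let ?y = "\<lambda>i. LX i + LXinv i"
  have "esym (N - 1) N ?y ^ n =
      (\<Sum>m\<in>comps N n. of_nat (multinomial n N m) * (\<Prod>j<N. (\<Prod>i\<in>{..<N} - {j}. ?y i) ^ m j))"
    unfolding esym_pred[OF assms] by (rule multinomial_theorem)
  also have "\<dots> = (\<Sum>m\<in>comps N n. of_nat (multinomial n N m) * (\<Prod>i<N. ?y i ^ (n - m i)))"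
    by (rule sum.cong) (auto simp: comps_def prod_power_prod_remove)
  finally show ?thesis
    by (simp add: r_def CT_sum CT_of_nat_mult CT_prod_power del: of_nat_prod)
qed

lemma r_pred_eq_sum_parity_comps:
  assumes "N \<ge> 1"
  shows "r (N - 1) N n = int (\<Sum>m\<in>{m\<in>comps N n. \<forall>i<N. m i mod 2 = n mod 2}.
                                multinomial n N m * (\<Prod>i<N. central_term (n - m i)))"
  unfolding r_pred_eq_sum_comps[OF assms]
proof (intro arg_cong[where f = int] sum.mono_neutral_right ballI)
  fix m assume "m \<in> comps N n - {m\<in>comps N n. \<forall>i<N. m i mod 2 = n mod 2}"
  then obtain j where "j < N" "m j mod 2 \<noteq> n mod 2" "m j \<le> n"
    using comps_le by blast
  then have "central_term (n - m j) = 0"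
    by (simp add: central_term_def) presburger
  with \<open>j < N\<close> show "multinomial n N m * (\<Prod>i<N. central_term (n - m i)) = 0"
    by (auto simp: prod_zero_iff)
qed (auto simp: finite_comps)

lemma comps_parity_sum:
  assumes "m \<in> comps N n" "\<forall>i<N. m i mod 2 = p"
  shows "2 * (\<Sum>i<N. m i div 2) + p * N = n"
proof -
  have "n = (\<Sum>i<N. 2 * (m i div 2) + p)"
    using assms by (auto simp: comps_def intro!: sum.cong)
  then show ?thesis
    by (simp add: sum.distrib sum_distrib_left)
qed

lemma comps_parity_eq_image:
  assumes "p < 2" "2 * s + p * N = n"
  shows "{m\<in>comps N n. \<forall>i<N. m i mod 2 = p} = (\<lambda>k i. if i < N then 2 * k i + p else 0) ` comps N s"
proof (intro equalityI subsetI)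
  fix m assume m: "m \<in> {m\<in>comps N n. \<forall>i<N. m i mod 2 = p}"
  then have "m = (\<lambda>i. if i < N then 2 * (m i div 2) + p else 0)"
    by (auto simp: comps_def fun_eq_iff)
  moreover have "(\<lambda>i. m i div 2) \<in> comps N s"
    using m comps_parity_sum[of m N n p] assms(2) by (auto simp: comps_def)
  ultimately show "m \<in> (\<lambda>k i. if i < N then 2 * k i + p else 0) ` comps N s"
    by (rule image_eqI)
next
  fix m assume "m \<in> (\<lambda>k i. if i < N then 2 * k i + p else 0) ` comps N s"
  then obtain k where k: "k \<in> comps N s" and m: "m = (\<lambda>i. if i < N then 2 * k i + p else 0)"
    by blast
  have "(\<Sum>i<N. m i) = (\<Sum>i<N. 2 * k i + p)"
    unfolding m by (rule sum.cong) auto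
  also have "\<dots> = 2 * (\<Sum>i<N. k i) + N * p"
    by (simp add: sum.distrib sum_distrib_left)
  also have "\<dots> = n"
    using k assms(2) by (simp add: comps_def mult.commute)
  finally show "m \<in> {m\<in>comps N n. \<forall>i<N. m i mod 2 = p}"
    using assms(1) by (auto simp: comps_def m)
qed

lemma inj_on_comps_double:
  "inj_on (\<lambda>k i. if i < N then 2 * k i + p else 0) (comps N s)"
proof (rule inj_onI)
  fix k k' assume k: "k \<in> comps N s" "k' \<in> comps N s"
    and eq: "(\<lambda>i. if i < N then 2 * k i + p else 0) = (\<lambda>i. if i < N then 2 * k' i + p else 0)"
  show "k = k'"
  proof
    fix i show "k i = k' i"
      using fun_cong[OF eq, of i] k by (cases "i < N") (auto simp: comps_def)
  qed
qed

lemma r_pred_same_parity: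
  assumes "N \<ge> 1" "p < 2" "2 * s + p * N = 2 * q + p"
  shows "r (N - 1) N (2 * q + p) =
           int (\<Sum>k\<in>comps N s. multinomial (2 * q + p) N (\<lambda>i. 2 * k i + p)
                 * (\<Prod>i<N. (2 * (q - k i)) choose (q - k i)))"
proof -
  let ?n = "2 * q + p"
  let ?double = "\<lambda>k i. if i < N then 2 * k i + p else 0"
  have "r (N - 1) N ?n = int (\<Sum>m\<in>?double ` comps N s. multinomial ?n N m * (\<Prod>i<N. central_term (?n - m i)))"
    using r_pred_eq_sum_parity_comps[OF assms(1)] comps_parity_eq_image[OF assms(2,3)] assms(2) by simp
  also have "\<dots> = int (\<Sum>k\<in>comps N s. multinomial ?n N (?double k) * (\<Prod>i<N. central_term (?n - ?double k i)))"
    by (simp add: sum.reindex inj_on_comps_double)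
  also have "\<dots> = int (\<Sum>k\<in>comps N s. multinomial ?n N (\<lambda>i. 2 * k i + p)
                 * (\<Prod>i<N. (2 * (q - k i)) choose (q - k i)))"
  proof (intro arg_cong[where f = int] sum.cong refl arg_cong2[where f = times])
    fix k assume k: "k \<in> comps N s"
    show "multinomial ?n N (?double k) = multinomial ?n N (\<lambda>i. 2 * k i + p)"
      by (rule multinomial_cong) simp
    have "k i \<le> q" if "i < N" for i
      using comps_le[OF k that] assms by (cases p) auto
    then show "(\<Prod>i<N. central_term (?n - ?double k i)) = (\<Prod>i<N. (2 * (q - k i)) choose (q - k i))"
      by (intro prod.cong) (auto simp: central_term_def simp flip: diff_mult_distrib2)
  qed
  finally show ?thesis .
qed

lemma r_pred_eq_0:
  assumes "N \<ge> 1" "p < 2" "\<And>s. 2 * s + p * N \<noteq> 2 * q + p"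
  shows "r (N - 1) N (2 * q + p) = 0"
proof -
  have "(2 * q + p) mod 2 = p"
    using assms(2) by simp
  moreover have "{m\<in>comps N (2 * q + p). \<forall>i<N. m i mod 2 = p} = {}"
    using comps_parity_sum assms(3) by blast
  ultimately show ?thesis
    unfolding r_pred_eq_sum_parity_comps[OF assms(1)] by (simp only: sum.empty of_nat_0)
qed

theorem theorem1:
  fixes N :: nat
  assumes "N \<ge> 2"
  shows "(\<forall>n. r (N - 1) N (2 * n) =
            int (\<Sum>k\<in>comps N n. multinomial (2 * n) N (\<lambda>i. 2 * k i)
                 * (\<Prod>i<N. (2 * (n - k i)) choose (n - k i))))
       \<and> (even N \<longrightarrow> (\<forall>n. r (N - 1) N (2 * n + 1) = 0))
       \<and> (odd N \<longrightarrow> (\<forall>n. r (N - 1) N (2 * n + 1) =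
            int (\<Sum>k\<in>{k\<in>comps N (nat (int n + (1 - int N) div 2)).
                           int n + (1 - int N) div 2 \<ge> 0}.
                 multinomial (2 * n + 1) N (\<lambda>i. 2 * k i + 1)
                 * (\<Prod>i<N. (2 * (n - k i)) choose (n - k i)))))"
proof (intro conjI allI impI)
  have N: "N \<ge> 1" using assms by simp
  fix n
  show "r (N - 1) N (2 * n) =
          int (\<Sum>k\<in>comps N n. multinomial (2 * n) N (\<lambda>i. 2 * k i)
               * (\<Prod>i<N. (2 * (n - k i)) choose (n - k i)))"
    using r_pred_same_parity[OF N, of 0 n n] by simp
  show "r (N - 1) N (2 * n + 1) = 0" if "even N"
    using r_pred_eq_0[OF N, of 1 n] that by presburger
  assume "odd N"
  then obtain c where c: "N = 2 * c + 1" by (rule oddE)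
  then have "(1 - int N) div 2 = - int c" by simp
  moreover have "nat (int n - int c) = n - c" by arith
  moreover have "r (N - 1) N (2 * n + 1) =
      int (\<Sum>k\<in>{k\<in>comps N (n - c). c \<le> n}. multinomial (2 * n + 1) N (\<lambda>i. 2 * k i + 1)
             * (\<Prod>i<N. (2 * (n - k i)) choose (n - k i)))"
  proof (cases "c \<le> n")
    case True
    then show ?thesis using r_pred_same_parity[OF N, of 1 "n - c" n] c by simp
  next
    case False
    then show ?thesis using r_pred_eq_0[OF N, of 1 n] c by simp
  qed
  ultimately show "r (N - 1) N (2 * n + 1) =
      int (\<Sum>k\<in>{k\<in>comps N (nat (int n + (1 - int N) div 2)). int n + (1 - int N) div 2 \<ge> 0}.
             multinomial (2 * n + 1) N (\<lambda>i. 2 * k i + 1) * (\<Prod>i<N. (2 * (n - k i)) choose (n - k i)))"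
    by simp
qed

end
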